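(* Assume $0<x^0<u^*$ and let $c>0$ be such that $\eta(c)<u^*$. For $\epsilon\in(0,2(c\wedge(\overline x-c)))$ let $d_\epsilon=\frac{1-\epsilon(\overline x-c-\epsilon/2)}{c-\epsilon/2}$ and define the density $f_\epsilon$ on $[0,\overline x]$ by $f_\epsilon(x)=d_\epsilon$ for $x\in[0,c-\epsilon]$, $f_\epsilon(x)=(1-\frac{d_\epsilon}{\epsilon})x+c(\frac{d_\epsilon}{\epsilon}-1)+\epsilon$ for $x\in[c-\epsilon,c]$, and $f_\epsilon(x)=\epsilon$ for $x\in[c,\overline x]$ (and $f_\epsilon=0$ elsewhere). Suppose the law of $Y$ has density $f_\epsilon$ (so that $\bar y=\overline x$), let $b_\epsilon$ be the corresponding solution of the Cauchy problem below and $\overline m$ the corresponding point $\min\{m\in[0,\overline x]:b_\epsilon(m)=m\}$. Then there exists $\epsilon>0$ such that $\overline m<u^*$.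
   Context: $\mathcal I=(\alpha,\infty)$, $-\infty\le\alpha<0$; $\mu,\sigma:\mathcal I\to\mathbb R$ Lipschitz with $\sigma>0$, $\alpha,+\infty$ natural boundaries of $dX_t=\mu(X_t)dt+\sigma(X_t)dB_t$; $r>0$; $U:[0,\infty)\to[0,\infty)$. Assumptions: (a) $\mu,\sigma$ are $C^1$ with Lipschitz derivatives, $\mu(0)>rU(0)$, $\sup_{x\ge0}\mu'(x)<r$; (b) $U$ is nondecreasing, concave, $C^2$ on $[0,\infty)$, and for some $u^*\ge0$: $U'\ge1$ on $[0,u^*]$, $U'=1$ on $[u^*,\infty)$, $\mu U'+\frac12\sigma^2U''-rU>0$ on $[0,u^* )$; (c) $\mu$ is twice differentiable with $\mu''\le0$ on $[0,\infty)$. Notation. $\overline x>0$ is the unique point with $\mu-rU>0$ on $[0,\overline x)$ and $<0$ on $(\overline x,\infty)$. $\psi,\phi$ are the positive increasing and decreasing solutions of $\frac12\sigma^2u''+\mu u'-ru=0$. $D(x,m)=\psi'(x)\phi(m)-\phi'(x)\psi(m)$, $N(x,m)=\phi(x)\psi(m)-\psi(x)\phi(m)+D(x,m)\frac{\mu(x)}{r}-D(x,x)U(m)$, $G(x)=1-\mu'(x)/r$. For $m\in[0,\overline x]$, $\eta(m)$ is the unique solution $x\ge0$ of $N(x,m)=0$ (known to exist; $\eta$ is increasing with $\eta(\overline x)=\overline x$ and $\eta(m)\ge m$), and $x^0=\eta(0)$. Given a density $f$ of $Y$ with distribution function $F$ and support bound $\bar y$, let $E(x,m)=\frac{f(m)/F(m)}{G(x)}\frac{N(x,m)}{D(x,m)}$;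 the Cauchy problem is: find $b:[0,\overline x]\to[0,\overline x]$ with $b\in C([0,\overline x])\cap C^1((0,\overline x\wedge\bar y))$, $b(0)=x^0$, $b'(m)=E(b(m),m)$ on $(0,\overline x\wedge\bar y)$, $b\equiv b(\overline x\wedge\bar y)$ on $(\overline x\wedge\bar y,\overline x]$ (it has a unique solution). *)

theory Defs
  imports "HOL-Analysis.Analysis"
begin

definition state_space :: "ereal \<Rightarrow> real set" where
  "state_space \<alpha> = {x. \<alpha> < ereal x}"

definition int0 :: "(real \<Rightarrow> real) \<Rightarrow> real \<Rightarrow> real" where
  "int0 g x = (if 0 \<le> x then integral {0..x} g else - integral {x..0} g)"

text \<open>Scale density (reference point 0, which lies in I) and speed density.\<close>
definition scale_dens :: "(real \<Rightarrow> real) \<Rightarrow> (real \<Rightarrow> real) \<Rightarrow> real \<Rightarrow> real" where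
  "scale_dens \<mu> \<sigma> x = exp (- int0 (\<lambda>y. 2 * \<mu> y / (\<sigma> y)\<^sup>2) x)"

definition speed_dens :: "(real \<Rightarrow> real) \<Rightarrow> (real \<Rightarrow> real) \<Rightarrow> real \<Rightarrow> real" where
  "speed_dens \<mu> \<sigma> x = 2 / ((\<sigma> x)\<^sup>2 * scale_dens \<mu> \<sigma> x)"

text \<open>Feller's classification: a boundary is natural iff both Feller integrals
  (Sigma and N in Karlin--Taylor notation) diverge.\<close>
definition natural_right :: "(real \<Rightarrow> real) \<Rightarrow> (real \<Rightarrow> real) \<Rightarrow> bool" where
  "natural_right \<mu> \<sigma> \<longleftrightarrow>
     nn_integral lborel (\<lambda>\<xi>. indicator {0..} \<xi> *
        ennreal (integral {0..\<xi>} (speed_dens \<mu> \<sigma>) * scale_dens \<mu> \<sigma> \<xi>)) = \<infinity> \<and>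
     nn_integral lborel (\<lambda>\<xi>. indicator {0..} \<xi> *
        ennreal (integral {0..\<xi>} (scale_dens \<mu> \<sigma>) * speed_dens \<mu> \<sigma> \<xi>)) = \<infinity>"

definition natural_left :: "ereal \<Rightarrow> (real \<Rightarrow> real) \<Rightarrow> (real \<Rightarrow> real) \<Rightarrow> bool" where
  "natural_left \<alpha> \<mu> \<sigma> \<longleftrightarrow>
     nn_integral lborel (\<lambda>\<xi>. indicator {x \<in> state_space \<alpha>. x \<le> 0} \<xi> *
        ennreal (integral {\<xi>..0} (speed_dens \<mu> \<sigma>) * scale_dens \<mu> \<sigma> \<xi>)) = \<infinity> \<and>
     nn_integral lborel (\<lambda>\<xi>. indicator {x \<in> state_space \<alpha>. x \<le> 0} \<xi> *
        ennreal (integral {\<xi>..0} (scale_dens \<mu> \<sigma>) * speed_dens \<mu> \<sigma> \<xi>)) = \<infinity>"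

definition Dfun :: "(real \<Rightarrow> real) \<Rightarrow> (real \<Rightarrow> real) \<Rightarrow> real \<Rightarrow> real \<Rightarrow> real" where
  "Dfun \<psi> \<phi> x m = deriv \<psi> x * \<phi> m - deriv \<phi> x * \<psi> m"

definition Nfun :: "(real \<Rightarrow> real) \<Rightarrow> real \<Rightarrow> (real \<Rightarrow> real) \<Rightarrow> (real \<Rightarrow> real) \<Rightarrow> (real \<Rightarrow> real)
    \<Rightarrow> real \<Rightarrow> real \<Rightarrow> real" where
  "Nfun \<mu> r U \<psi> \<phi> x m =
     \<phi> x * \<psi> m - \<psi> x * \<phi> m + Dfun \<psi> \<phi> x m * \<mu> x / r - Dfun \<psi> \<phi> x x * U m"

definition Gfun :: "(real \<Rightarrow> real) \<Rightarrow> real \<Rightarrow> real \<Rightarrow> real" where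
  "Gfun \<mu> r x = 1 - deriv \<mu> x / r"

definition eta :: "(real \<Rightarrow> real) \<Rightarrow> real \<Rightarrow> (real \<Rightarrow> real) \<Rightarrow> (real \<Rightarrow> real) \<Rightarrow> (real \<Rightarrow> real)
    \<Rightarrow> real \<Rightarrow> real" where
  "eta \<mu> r U \<psi> \<phi> m = (THE x. 0 \<le> x \<and> Nfun \<mu> r U \<psi> \<phi> x m = 0)"

definition Efun :: "(real \<Rightarrow> real) \<Rightarrow> real \<Rightarrow> (real \<Rightarrow> real) \<Rightarrow> (real \<Rightarrow> real) \<Rightarrow> (real \<Rightarrow> real)
    \<Rightarrow> (real \<Rightarrow> real) \<Rightarrow> (real \<Rightarrow> real) \<Rightarrow> real \<Rightarrow> real \<Rightarrow> real" where
  "Efun \<mu> r U \<psi> \<phi> f F x m =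
     (f m / F m) / Gfun \<mu> r x * (Nfun \<mu> r U \<psi> \<phi> x m / Dfun \<psi> \<phi> x m)"

definition cauchy_sol :: "(real \<Rightarrow> real \<Rightarrow> real) \<Rightarrow> real \<Rightarrow> real \<Rightarrow> real \<Rightarrow> (real \<Rightarrow> real) \<Rightarrow> bool" where
  "cauchy_sol E x0 xbar ybar b \<longleftrightarrow>
     (\<forall>m\<in>{0..xbar}. b m \<in> {0..xbar}) \<and>
     continuous_on {0..xbar} b \<and>
     (\<forall>m\<in>{0<..<min xbar ybar}. b differentiable (at m)) \<and>
     continuous_on {0<..<min xbar ybar} (deriv b) \<and>
     b 0 = x0 \<and>
     (\<forall>m\<in>{0<..<min xbar ybar}. deriv b m = E (b m) m) \<and>
     (\<forall>m\<in>{min xbar ybar<..xbar}. b m = b (min xbar ybar))"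

definition d_eps :: "real \<Rightarrow> real \<Rightarrow> real \<Rightarrow> real" where
  "d_eps xbar c \<epsilon> = (1 - \<epsilon> * (xbar - c - \<epsilon> / 2)) / (c - \<epsilon> / 2)"

definition f_eps :: "real \<Rightarrow> real \<Rightarrow> real \<Rightarrow> real \<Rightarrow> real" where
  "f_eps xbar c \<epsilon> x =
     (if 0 \<le> x \<and> x \<le> c - \<epsilon> then d_eps xbar c \<epsilon>
      else if c - \<epsilon> \<le> x \<and> x \<le> c then
        (1 - d_eps xbar c \<epsilon> / \<epsilon>) * x + c * (d_eps xbar c \<epsilon> / \<epsilon> - 1) + \<epsilon>
      else if c \<le> x \<and> x \<le> xbar then \<epsilon>
      else 0)"

text \<open>Distribution function of Y (f_eps vanishes on the negative reals).\<close>
definition F_eps :: "real \<Rightarrow> real \<Rightarrow> real \<Rightarrow> real \<Rightarrow> real" where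
  "F_eps xbar c \<epsilon> m = integral {0..m} (f_eps xbar c \<epsilon>)"

end

theory Submission
  imports Defs
begin

(* Multiplying N(x,m) by the reciprocal 1/s(x) of the scale density gives a function of x with
   derivative -G D / s < 0 on [0,oo), so N(.,m) has a unique zero eta(m) > m and is negative
   beyond it. A maximum principle for the generator, based on the last condition of (b), shows
   N(eta(c), m) <= 0 for all m <= c, because eta(c) < ustar. Hence E(b,m) <= 0 whenever b > eta(c)
   and m <= c, and the solution, which starts at x0 = eta(0) <= eta(c), stays below eta(c) on
   [0,c]. On (c,xbar] the density f_eps equals eps while F_eps >= 1/4, so the slope of the
   solution is O(eps) there, and for small eps it meets the diagonal before (eta(c) + ustar)/2. *)

lemma local_min_imp_deriv2_nonneg:
  fixes f f' :: "real \<Rightarrow> real"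
  assumes "a < x" "x < b"
    and is_min: "\<And>y. y \<in> {a<..<b} \<Longrightarrow> f x \<le> f y"
    and f': "\<And>y. y \<in> {a<..<b} \<Longrightarrow> (f has_real_derivative f' y) (at y)"
    and f'': "(f' has_real_derivative f'') (at x)"
  shows "f' x = 0" and "f'' \<ge> 0"
proof -
  show f'x: "f' x = 0"
  proof (rule DERIV_local_min[OF f'])
    show "0 < min (x - a) (b - x)" using assms by simp
    show "\<forall>y. \<bar>x - y\<bar> < min (x - a) (b - x) \<longrightarrow> f x \<le> f y"
      by (auto intro!: is_min simp: abs_less_iff)
  qed (use assms in auto)
  show "f'' \<ge> 0"
  proof (rule ccontr)
    assume "\<not> f'' \<ge> 0"
    then obtain d where d: "d > 0" "\<And>h. 0 < h \<Longrightarrow> h < d \<Longrightarrow> f' (x + h) < f' x"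
      using DERIV_neg_dec_right[OF f''] by force
    define t where "t = min (d / 2) ((b - x) / 2)"
    have "t \<le> d / 2" "t \<le> (b - x) / 2" unfolding t_def by (rule min.cobounded1, rule min.cobounded2)
    then have t: "0 < t" "t < d" "x + t < b" using d assms by (auto simp: t_def)
    obtain z where z: "x < z" "z < x + t" "f (x + t) - f x = t * f' z"
      using MVT2[of x "x + t" f f'] t assms by (force intro: f')
    have "f' z < 0" using d(2)[of "z - x"] z t f'x by simp
    then have "t * f' z < 0" by (rule mult_pos_neg[OF t(1)])
    then have "f (x + t) < f x" using z by simp
    moreover have "f x \<le> f (x + t)" using is_min[of "x + t"] t assms by simp
    ultimately show False by simp
  qed
qed

lemma upper_barrier:
  fixes b :: "real \<Rightarrow> real"
  assumes cont: "continuous_on {a..c} b" and start: "b a \<le> X"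
    and decr: "\<And>t. t \<in> {a<..<c} \<Longrightarrow> X < b t \<Longrightarrow> \<exists>y. (b has_real_derivative y) (at t) \<and> y \<le> 0"
    and m: "m \<in> {a..c}"
  shows "b m \<le> X"
proof (rule ccontr)
  assume "\<not> b m \<le> X"
  define T where "T = {a..m} \<inter> b -` {..X}"
  have "closed T"
    unfolding T_def using m
    by (intro continuous_closed_preimage continuous_on_subset[OF cont]) auto
  then have "compact T"
    by (simp add: compact_eq_bounded_closed T_def bounded_Int)
  moreover have "a \<in> T" using start m by (simp add: T_def)
  ultimately obtain t0 where t0: "t0 \<in> T" "\<And>t. t \<in> T \<Longrightarrow> t \<le> t0"
    using compact_attains_sup[of T] by blast
  have t0m: "a \<le> t0" "t0 < m" "b t0 \<le> X"
    using t0(1) \<open>\<not> b m \<le> X\<close> by (auto simp: T_def le_less)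
  have "b m \<le> b t0"
  proof (rule DERIV_nonpos_imp_decreasing_open[of t0 m])
    show "continuous_on {t0..m} b" by (rule continuous_on_subset[OF cont]) (use t0m m in auto)
    fix t assume t: "t0 < t" "t < m"
    then have "X < b t" using t0(2)[of t] t0m by (force simp: T_def)
    then show "\<exists>y. (b has_real_derivative y) (at t) \<and> y \<le> 0" using decr t t0m m by auto
  qed (use t0m in simp)
  with t0m \<open>\<not> b m \<le> X\<close> show False by simp
qed

lemma Inf_fixed_points_le:
  fixes b :: "real \<Rightarrow> real"
  assumes "continuous_on {a..y} b" "a \<le> b a" "b y \<le> y" "a \<le> y" "y \<le> z"
  shows "Inf {m\<in>{a..z}. b m = m} \<le> y"
proof -
  have "continuous_on {a..y} (\<lambda>m. b m - m)" using assms(1) by (intro continuous_intros)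
  then obtain x where x: "a \<le> x" "x \<le> y" "b x - x = 0"
    using IVT2'[of "\<lambda>m. b m - m" y 0 a] assms by auto
  then have "Inf {m\<in>{a..z}. b m = m} \<le> x"
    using assms by (intro cInf_lower) (auto intro: bdd_belowI[of _ a])
  with x show ?thesis by simp
qed

lemma increment_le_of_deriv_le:
  fixes b b' :: "real \<Rightarrow> real"
  assumes "a \<le> c" and cont: "continuous_on {a..c} b"
    and der: "\<And>t. t \<in> {a<..<c} \<Longrightarrow> (b has_real_derivative b' t) (at t)"
    and bound: "\<And>t. t \<in> {a<..<c} \<Longrightarrow> b' t \<le> L"
  shows "b c - b a \<le> (c - a) * L"
proof -
  have "b c - L * c \<le> b a - L * a"
  proof (rule DERIV_nonpos_imp_decreasing_open[OF \<open>a \<le> c\<close>])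
    fix t assume "a < t" "t < c"
    then have "((\<lambda>t. b t - L * t) has_real_derivative b' t - L) (at t)" "b' t - L \<le> 0"
      using der bound by (auto intro!: derivative_eq_intros)
    then show "\<exists>y. ((\<lambda>t. b t - L * t) has_real_derivative y) (at t) \<and> y \<le> 0" by blast
  qed (use cont in \<open>auto intro!: continuous_intros\<close>)
  then show ?thesis by (simp add: algebra_simps)
qed

lemma cauchy_sol_has_deriv:
  assumes "cauchy_sol E x0 xbar xbar b" "t \<in> {0<..<xbar}"
  shows "(b has_real_derivative E (b t) t) (at t)"
proof -
  have "b differentiable (at t)" "deriv b t = E (b t) t"
    using assms unfolding cauchy_sol_def by auto
  then show ?thesis by (metis DERIV_deriv_iff_real_differentiable)
qed

text \<open>Stronger than \<open>\<epsilon> < 2 min c (xbar - c)\<close>: these bounds keep \<open>d_eps\<close> of order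
  \<open>1/c\<close>, so that \<open>F_eps \<ge> 1/4\<close> from \<open>c - \<epsilon>\<close> on.\<close>
locale eps_density =
  fixes xbar c \<epsilon> :: real
  assumes eps_pos: "0 < \<epsilon>" and eps_c: "2 * \<epsilon> \<le> c" and eps_xbar: "2 * \<epsilon> * xbar \<le> 1"
    and "c < xbar"
begin

lemma d_eps_pos: "d_eps xbar c \<epsilon> > 0"
  and d_eps_mass: "d_eps xbar c \<epsilon> * (c - \<epsilon>) \<ge> 1/4"
proof -
  have "\<epsilon> * (xbar - c - \<epsilon>/2) \<le> \<epsilon> * xbar" using eps_pos eps_c by (intro mult_left_mono) auto
  then have num: "1 - \<epsilon> * (xbar - c - \<epsilon>/2) \<ge> 1/2" using eps_xbar by linarith
  then show "d_eps xbar c \<epsilon> > 0" unfolding d_eps_def using eps_pos eps_c by simp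
  have "(c - \<epsilon>) / (c - \<epsilon>/2) \<ge> 1/2" using eps_pos eps_c by (simp add: field_simps)
  with num have "1/2 * (1/2) \<le> (1 - \<epsilon> * (xbar - c - \<epsilon>/2)) * ((c - \<epsilon>) / (c - \<epsilon>/2))"
    by (intro mult_mono) auto
  then show "d_eps xbar c \<epsilon> * (c - \<epsilon>) \<ge> 1/4" unfolding d_eps_def by simp
qed

lemma f_eps_left: "0 \<le> x \<Longrightarrow> x \<le> c - \<epsilon> \<Longrightarrow> f_eps xbar c \<epsilon> x = d_eps xbar c \<epsilon>"
  unfolding f_eps_def by auto

lemma f_eps_right: "c < x \<Longrightarrow> x \<le> xbar \<Longrightarrow> f_eps xbar c \<epsilon> x = \<epsilon>"
  unfolding f_eps_def using eps_pos by auto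

lemma f_eps_middle_eq:
  "(1 - d_eps xbar c \<epsilon> / \<epsilon>) * x + c * (d_eps xbar c \<epsilon> / \<epsilon> - 1) + \<epsilon>
     = d_eps xbar c \<epsilon> * (c - x) / \<epsilon> + (\<epsilon> - (c - x))"
  using eps_pos by (simp add: field_simps)

lemma f_eps_nonneg: "f_eps xbar c \<epsilon> x \<ge> 0"
  unfolding f_eps_def f_eps_middle_eq using d_eps_pos eps_pos by auto

lemma continuous_on_f_eps: "continuous_on {0..xbar} (f_eps xbar c \<epsilon>)"
proof -
  define d where "d = d_eps xbar c \<epsilon>"
  define line where "line x = d * (c - x) / \<epsilon> + (\<epsilon> - (c - x))" for x
  have "continuous_on {0..xbar} (\<lambda>x. if x \<le> c - \<epsilon> then d else if x \<le> c then line x else \<epsilon>)"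
    unfolding line_def using eps_pos
    by (intro continuous_on_cases_le continuous_intros) auto
  moreover have "(if x \<le> c - \<epsilon> then d else if x \<le> c then line x else \<epsilon>) = f_eps xbar c \<epsilon> x"
    if "x \<in> {0..xbar}" for x
    using that unfolding f_eps_def f_eps_middle_eq d_def line_def by auto
  ultimately show ?thesis by (rule continuous_on_eq)
qed

lemma f_eps_integrable: "t \<le> xbar \<Longrightarrow> f_eps xbar c \<epsilon> integrable_on {0..t}"
  by (rule integrable_continuous_real, rule continuous_on_subset[OF continuous_on_f_eps]) auto

lemma F_eps_nonneg: "t \<le> xbar \<Longrightarrow> F_eps xbar c \<epsilon> t \<ge> 0"
  unfolding F_eps_def by (rule integral_nonneg[OF f_eps_integrable]) (auto intro: f_eps_nonneg)

lemma F_eps_ge: assumes "c - \<epsilon> \<le> t" "t \<le> xbar" shows "F_eps xbar c \<epsilon> t \<ge> 1/4"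
proof -
  have "1/4 \<le> integral {0..c - \<epsilon>} (\<lambda>x. d_eps xbar c \<epsilon>)"
    using d_eps_mass eps_c eps_pos by (simp add: mult.commute)
  also have "\<dots> = integral {0..c - \<epsilon>} (f_eps xbar c \<epsilon>)"
    by (rule integral_cong) (simp add: f_eps_left)
  also have "\<dots> \<le> integral {0..t} (f_eps xbar c \<epsilon>)"
    using assms eps_pos eps_c by (intro integral_subset_le f_eps_integrable) (auto simp: f_eps_nonneg)
  finally show ?thesis unfolding F_eps_def .
qed

end

locale diffusion_setting =
  fixes \<alpha> :: ereal and \<mu> \<sigma> U dU d2U \<psi> \<phi> :: "real \<Rightarrow> real"
    and r ustar xbar k a0 :: real
  assumes a0: "\<alpha> < ereal a0" "a0 < 0"
    and sigma_pos: "\<forall>x\<in>state_space \<alpha>. \<sigma> x > 0"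
    and r_pos: "r > 0"
    and mu_diff: "\<forall>x\<in>state_space \<alpha>. \<mu> differentiable (at x)"
    and sigma_diff: "\<forall>x\<in>state_space \<alpha>. \<sigma> differentiable (at x)"
    and k_lt_r: "k < r" and deriv_mu_le: "\<forall>x\<ge>0. deriv \<mu> x \<le> k"
    and U_d1: "\<forall>x\<ge>0. (U has_real_derivative dU x) (at x within {0..})"
    and U_d2: "\<forall>x\<ge>0. (dU has_real_derivative d2U x) (at x within {0..})"
    and U_gen: "\<forall>x\<in>{0..<ustar}. \<mu> x * dU x + (\<sigma> x)\<^sup>2 / 2 * d2U x - r * U x > 0"
    and psi_diff: "\<forall>x\<in>state_space \<alpha>. \<psi> differentiable (at x) \<and> deriv \<psi> differentiable (at x)"
    and phi_diff: "\<forall>x\<in>state_space \<alpha>. \<phi> differentiable (at x) \<and> deriv \<phi> differentiable (at x)"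
    and psi_ode: "\<forall>x\<in>state_space \<alpha>.
        (\<sigma> x)\<^sup>2 / 2 * deriv (deriv \<psi>) x + \<mu> x * deriv \<psi> x - r * \<psi> x = 0"
    and phi_ode: "\<forall>x\<in>state_space \<alpha>.
        (\<sigma> x)\<^sup>2 / 2 * deriv (deriv \<phi>) x + \<mu> x * deriv \<phi> x - r * \<phi> x = 0"
    and psi_pos: "\<forall>x\<in>state_space \<alpha>. \<psi> x > 0"
    and phi_pos: "\<forall>x\<in>state_space \<alpha>. \<phi> x > 0"
    and psi_inc: "strict_mono_on (state_space \<alpha>) \<psi>"
    and phi_dec: "\<forall>x\<in>state_space \<alpha>. \<forall>y\<in>state_space \<alpha>. x < y \<longrightarrow> \<phi> y < \<phi> x"
    and xbar_pos: "xbar > 0"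
    and xbar_left: "\<forall>x\<in>{0..<xbar}. \<mu> x - r * U x > 0"
begin

abbreviation "N \<equiv> Nfun \<mu> r U \<psi> \<phi>"
abbreviation "D \<equiv> Dfun \<psi> \<phi>"
abbreviation "G \<equiv> Gfun \<mu> r"
abbreviation "\<eta> \<equiv> eta \<mu> r U \<psi> \<phi>"

lemma in_state_space: "a0 \<le> x \<Longrightarrow> x \<in> state_space \<alpha>"
  using a0 by (auto simp: state_space_def intro: less_le_trans)

lemma nonneg_in_state_space: "0 \<le> x \<Longrightarrow> x \<in> state_space \<alpha>"
  using a0 by (simp add: in_state_space)

lemma psi_has_deriv: "x \<in> state_space \<alpha> \<Longrightarrow> (\<psi> has_real_derivative deriv \<psi> x) (at x)"
  and dpsi_has_deriv: "x \<in> state_space \<alpha> \<Longrightarrow> (deriv \<psi> has_real_derivative deriv (deriv \<psi>) x) (at x)"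
  and phi_has_deriv: "x \<in> state_space \<alpha> \<Longrightarrow> (\<phi> has_real_derivative deriv \<phi> x) (at x)"
  and dphi_has_deriv: "x \<in> state_space \<alpha> \<Longrightarrow> (deriv \<phi> has_real_derivative deriv (deriv \<phi>) x) (at x)"
  and mu_has_deriv: "x \<in> state_space \<alpha> \<Longrightarrow> (\<mu> has_real_derivative deriv \<mu> x) (at x)"
  using psi_diff phi_diff mu_diff DERIV_deriv_iff_real_differentiable by blast+

lemma sigma_nonzero: "x \<in> state_space \<alpha> \<Longrightarrow> \<sigma> x \<noteq> 0"
  using sigma_pos by force

lemma deriv2_psi: "x \<in> state_space \<alpha> \<Longrightarrow>
    deriv (deriv \<psi>) x = 2 * (r * \<psi> x - \<mu> x * deriv \<psi> x) / (\<sigma> x)\<^sup>2"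
  and deriv2_phi: "x \<in> state_space \<alpha> \<Longrightarrow>
    deriv (deriv \<phi>) x = 2 * (r * \<phi> x - \<mu> x * deriv \<phi> x) / (\<sigma> x)\<^sup>2"
  using psi_ode phi_ode sigma_nonzero[of x] by (auto simp: field_simps)

lemma continuous_on_psi: "S \<subseteq> state_space \<alpha> \<Longrightarrow> continuous_on S \<psi>"
  and continuous_on_dpsi: "S \<subseteq> state_space \<alpha> \<Longrightarrow> continuous_on S (deriv \<psi>)"
  and continuous_on_phi: "S \<subseteq> state_space \<alpha> \<Longrightarrow> continuous_on S \<phi>"
  and continuous_on_dphi: "S \<subseteq> state_space \<alpha> \<Longrightarrow> continuous_on S (deriv \<phi>)"
  and continuous_on_mu: "S \<subseteq> state_space \<alpha> \<Longrightarrow> continuous_on S \<mu>"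
  and continuous_on_sigma: "S \<subseteq> state_space \<alpha> \<Longrightarrow> continuous_on S \<sigma>"
  by (meson DERIV_isCont continuous_at_imp_continuous_on subsetD psi_has_deriv dpsi_has_deriv
      phi_has_deriv dphi_has_deriv mu_has_deriv sigma_diff differentiable_imp_continuous_within)+

lemma continuous_on_U: "continuous_on {0..} U"
  using U_d1 DERIV_continuous continuous_on_eq_continuous_within by (metis atLeast_iff)

lemma U_has_deriv: "0 < x \<Longrightarrow> (U has_real_derivative dU x) (at x)"
  using U_d1[rule_format, of x] at_within_interior[of x "{0..}"] by simp

lemma dU_has_deriv: "0 < x \<Longrightarrow> (dU has_real_derivative d2U x) (at x)"
  using U_d2[rule_format, of x] at_within_interior[of x "{0..}"] by simp

lemma deriv_psi_nonneg: assumes "a0 \<le> x" shows "deriv \<psi> x \<ge> 0"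
proof (rule ccontr)
  assume "\<not> ?thesis"
  then obtain d where d: "d > 0" "\<And>h. 0 < h \<Longrightarrow> h < d \<Longrightarrow> \<psi> (x + h) < \<psi> x"
    using DERIV_neg_dec_right[OF psi_has_deriv[OF in_state_space[OF assms]]] by force
  have "\<psi> x < \<psi> (x + d/2)"
    using psi_inc assms d(1) in_state_space[of x] in_state_space[of "x + d/2"]
    unfolding strict_mono_on_def by auto
  with d(2)[of "d/2"] d(1) show False by auto
qed

lemma deriv_phi_nonpos: assumes "a0 \<le> x" shows "deriv \<phi> x \<le> 0"
proof (rule ccontr)
  assume "\<not> ?thesis"
  then obtain d where d: "d > 0" "\<And>h. 0 < h \<Longrightarrow> h < d \<Longrightarrow> \<phi> x < \<phi> (x + h)"
    using DERIV_pos_inc_right[OF phi_has_deriv[OF in_state_space[OF assms]]] by force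
  have "\<phi> (x + d/2) < \<phi> x"
    using phi_dec assms d(1) in_state_space[of x] in_state_space[of "x + d/2"] by auto
  with d(2)[of "d/2"] d(1) show False by auto
qed

lemma deriv_psi_pos: assumes "0 \<le> x" shows "deriv \<psi> x > 0"
proof (rule ccontr)
  assume not_pos: "\<not> ?thesis"
  have xI: "x \<in> state_space \<alpha>" using nonneg_in_state_space assms by simp
  have zero: "deriv \<psi> x = 0" using deriv_psi_nonneg[of x] not_pos a0(2) assms by linarith
  \<comment> \<open>by the ODE, a critical point of \<open>\<psi>\<close> would be a strict local minimum of \<open>\<psi>'\<close>\<close>
  have "deriv (deriv \<psi>) x > 0" using deriv2_psi[OF xI] zero psi_pos xI sigma_nonzero[OF xI] r_pos by auto
  then obtain d where d: "d > 0" "\<And>h. 0 < h \<Longrightarrow> h < d \<Longrightarrow> deriv \<psi> (x - h) < deriv \<psi> x"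
    using DERIV_pos_inc_left[OF dpsi_has_deriv[OF xI]] by force
  define h where "h = min (d/2) (- a0)"
  have "deriv \<psi> (x - h) < 0" using d zero a0 by (auto simp: h_def)
  moreover have "a0 \<le> x - h" using assms by (auto simp: h_def)
  ultimately show False using deriv_psi_nonneg by force
qed

lemma gap_pos: "0 < 1 - k / r"
  using k_lt_r r_pos by (simp add: field_simps)

lemma G_ge: "0 \<le> x \<Longrightarrow> 1 - k / r \<le> G x"
  using deriv_mu_le r_pos unfolding Gfun_def by (simp add: divide_right_mono)

lemma D_ge: assumes "0 \<le> x" "0 \<le> m" shows "deriv \<psi> x * \<phi> m \<le> D x m"
proof -
  have "deriv \<phi> x \<le> 0" using deriv_phi_nonpos a0 assms by auto
  moreover have "\<psi> m > 0" using psi_pos nonneg_in_state_space assms by auto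
  ultimately show ?thesis unfolding Dfun_def by (simp add: mult_nonpos_nonneg)
qed

lemma D_pos: assumes "0 \<le> x" "0 \<le> m" shows "0 < D x m"
proof -
  have "\<phi> m > 0" using phi_pos nonneg_in_state_space assms by auto
  then have "deriv \<psi> x * \<phi> m > 0" using deriv_psi_pos assms by auto
  then show ?thesis using D_ge[OF assms] by linarith
qed

lemma D_has_deriv:
  assumes "x \<in> state_space \<alpha>"
  shows "((\<lambda>x. D x m) has_real_derivative deriv (deriv \<psi>) x * \<phi> m - deriv (deriv \<phi>) x * \<psi> m) (at x)"
  unfolding Dfun_def
  by (auto intro!: derivative_eq_intros dpsi_has_deriv[OF assms] dphi_has_deriv[OF assms])

lemma D_diag_has_deriv:
  assumes "x \<in> state_space \<alpha>"
  shows "((\<lambda>x. D x x) has_real_derivative deriv (deriv \<psi>) x * \<phi> x - deriv (deriv \<phi>) x * \<psi> x) (at x)"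
  unfolding Dfun_def
  by (auto intro!: derivative_eq_intros psi_has_deriv[OF assms] dpsi_has_deriv[OF assms]
      phi_has_deriv[OF assms] dphi_has_deriv[OF assms])

lemma N_has_deriv:
  assumes "x \<in> state_space \<alpha>"
  shows "((\<lambda>x. N x m) has_real_derivative
      deriv \<phi> x * \<psi> m - deriv \<psi> x * \<phi> m
      + ((deriv (deriv \<psi>) x * \<phi> m - deriv (deriv \<phi>) x * \<psi> m) * \<mu> x + D x m * deriv \<mu> x) / r
      - (deriv (deriv \<psi>) x * \<phi> x - deriv (deriv \<phi>) x * \<psi> x) * U m) (at x)"
  unfolding Nfun_def
  using r_pos
  by (auto intro!: derivative_eq_intros D_has_deriv[OF assms] D_diag_has_deriv[OF assms]
      psi_has_deriv[OF assms] phi_has_deriv[OF assms] mu_has_deriv[OF assms])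

text \<open>The reciprocal of the scale density, normalised at \<open>a0\<close> instead of \<open>0\<close>.\<close>
definition inv_scale :: "real \<Rightarrow> real" where
  "inv_scale x = exp (integral {a0..x} (\<lambda>y. 2 * \<mu> y / (\<sigma> y)\<^sup>2))"

lemma inv_scale_pos: "0 < inv_scale x"
  unfolding inv_scale_def by simp

lemma inv_scale_has_deriv:
  assumes "a0 < x" shows "(inv_scale has_real_derivative 2 * \<mu> x / (\<sigma> x)\<^sup>2 * inv_scale x) (at x)"
proof -
  have "continuous_on {a0..x + 1} (\<lambda>y. 2 * \<mu> y / (\<sigma> y)\<^sup>2)"
    using sigma_nonzero in_state_space
    by (intro continuous_intros continuous_on_mu continuous_on_sigma) auto
  then have "((\<lambda>x. integral {a0..x} (\<lambda>y. 2 * \<mu> y / (\<sigma> y)\<^sup>2)) has_real_derivative 2 * \<mu> x / (\<sigma> x)\<^sup>2)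
      (at x within {a0..x + 1})"
    by (rule integral_has_real_derivative) (use assms in auto)
  moreover have "at x within {a0..x + 1} = at x"
    by (rule at_within_interior) (use assms in auto)
  ultimately show ?thesis
    unfolding inv_scale_def by (auto intro!: derivative_eq_intros)
qed

text \<open>The two ODEs eliminate all second derivatives: \<open>(N(\<cdot>,m)/s)' = - G D(\<cdot>,m)/s\<close>.\<close>
lemma inv_scale_N_has_deriv:
  assumes "a0 < x"
  shows "((\<lambda>x. inv_scale x * N x m) has_real_derivative - (inv_scale x * G x * D x m)) (at x)"
proof -
  have xI: "x \<in> state_space \<alpha>" using in_state_space assms by simp
  show ?thesis
    apply (rule DERIV_cong[OF DERIV_mult[OF inv_scale_has_deriv[OF assms] N_has_deriv[OF xI]]])
    apply (simp only: deriv2_psi[OF xI] deriv2_phi[OF xI] Gfun_def Dfun_def Nfun_def)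
    using sigma_nonzero[OF xI] r_pos by (simp add: field_simps power2_eq_square)
qed

lemma inv_scale_N_strict_decreasing:
  assumes "0 \<le> x1" "x1 < x2" "0 \<le> m"
  shows "inv_scale x2 * N x2 m < inv_scale x1 * N x1 m"
proof (rule DERIV_neg_imp_decreasing[OF assms(2)])
  fix x assume "x1 \<le> x" "x \<le> x2"
  then have "0 \<le> x" "a0 < x" using assms a0 by auto
  moreover have "0 < inv_scale x * G x * D x m"
    using inv_scale_pos G_ge gap_pos D_pos \<open>0 \<le> x\<close> assms(3)
    by (metis mult_pos_pos order_less_le_trans)
  ultimately show "\<exists>y. ((\<lambda>x. inv_scale x * N x m) has_real_derivative y) (at x) \<and> y < 0"
    using inv_scale_N_has_deriv by (metis neg_less_0_iff_less)
qed

lemma N_neg_after_root: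
  assumes "0 \<le> x1" "x1 < x2" "0 \<le> m" "N x1 m \<le> 0"
  shows "N x2 m < 0"
proof -
  have "inv_scale x2 * N x2 m < inv_scale x1 * N x1 m"
    by (rule inv_scale_N_strict_decreasing[OF assms(1-3)])
  also have "\<dots> \<le> 0" using inv_scale_pos[of x1] assms(4) by (simp add: mult_nonneg_nonpos)
  finally show ?thesis using inv_scale_pos[of x2] by (simp add: mult_less_0_iff)
qed

lemma N_pos_before_root:
  assumes "0 \<le> x1" "x1 < x2" "0 \<le> m" "N x2 m \<ge> 0"
  shows "N x1 m > 0"
  using N_neg_after_root[OF assms(1-3)] assms(4) by force

lemma inv_scale_deriv_psi_mono:
  assumes "0 \<le> x" shows "inv_scale 0 * deriv \<psi> 0 \<le> inv_scale x * deriv \<psi> x"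
proof (rule DERIV_nonneg_imp_nondecreasing[OF assms])
  fix t assume "0 \<le> t" "t \<le> x"
  then have t: "a0 < t" "t \<in> state_space \<alpha>" using a0 nonneg_in_state_space by auto
  have "((\<lambda>x. inv_scale x * deriv \<psi> x) has_real_derivative inv_scale t * (2 * r * \<psi> t / (\<sigma> t)\<^sup>2)) (at t)"
    using sigma_nonzero[OF t(2)]
    by (auto intro!: derivative_eq_intros inv_scale_has_deriv[OF t(1)] dpsi_has_deriv[OF t(2)]
        simp: deriv2_psi[OF t(2)] field_simps power2_eq_square)
  moreover have "0 \<le> inv_scale t * (2 * r * \<psi> t / (\<sigma> t)\<^sup>2)"
    using inv_scale_pos[of t] r_pos psi_pos t(2) by (simp add: less_imp_le)
  ultimately show "\<exists>y. ((\<lambda>x. inv_scale x * deriv \<psi> x) has_real_derivative y) (at t) \<and> 0 \<le> y"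
    by blast
qed

lemma inv_scale_N_linear_decrease:
  assumes "0 \<le> m"
  shows "\<exists>\<kappa>>0. \<forall>x\<ge>0. inv_scale x * N x m \<le> inv_scale 0 * N 0 m - \<kappa> * x"
proof -
  define \<kappa> where "\<kappa> = (1 - k / r) * (\<phi> m * (inv_scale 0 * deriv \<psi> 0))"
  have \<phi>m: "0 < \<phi> m" using phi_pos nonneg_in_state_space assms by auto
  have base: "0 < inv_scale 0 * deriv \<psi> 0" using inv_scale_pos deriv_psi_pos by simp
  have lower: "\<kappa> \<le> inv_scale x * G x * D x m" if "0 \<le> x" for x
  proof -
    have "\<kappa> \<le> (1 - k / r) * (\<phi> m * (inv_scale x * deriv \<psi> x))"
      unfolding \<kappa>_def using gap_pos \<phi>m inv_scale_deriv_psi_mono[OF that]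
      by (intro mult_left_mono) auto
    also have "\<dots> \<le> G x * (\<phi> m * (inv_scale x * deriv \<psi> x))"
      using G_ge[OF that] \<phi>m base inv_scale_deriv_psi_mono[OF that]
      by (intro mult_right_mono) auto
    also have "\<dots> = inv_scale x * G x * (deriv \<psi> x * \<phi> m)" by simp
    also have "\<dots> \<le> inv_scale x * G x * D x m"
      using D_ge[OF that assms] inv_scale_pos[of x] G_ge[OF that] gap_pos by (intro mult_left_mono) auto
    finally show ?thesis .
  qed
  have "inv_scale x * N x m + \<kappa> * x \<le> inv_scale 0 * N 0 m + \<kappa> * 0" if "0 \<le> x" for x
  proof (rule DERIV_nonpos_imp_nonincreasing[OF that])
    fix t assume t: "0 \<le> t" "t \<le> x"
    then have "a0 < t" using a0 by simp
    then have "((\<lambda>x. inv_scale x * N x m + \<kappa> * x) has_real_derivative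
        - (inv_scale t * G t * D t m) + \<kappa> * 1) (at t)"
      by (intro DERIV_add inv_scale_N_has_deriv DERIV_cmult DERIV_ident)
    then show "\<exists>y. ((\<lambda>x. inv_scale x * N x m + \<kappa> * x) has_real_derivative y) (at t) \<and> y \<le> 0"
      using lower[OF t(1)] by force
  qed
  moreover have "0 < \<kappa>" unfolding \<kappa>_def using gap_pos \<phi>m base by simp
  ultimately show ?thesis by (auto simp: algebra_simps)
qed

lemma N_diag_pos: assumes "0 \<le> m" "m < xbar" shows "0 < N m m"
proof -
  have "N m m = D m m * (\<mu> m - r * U m) / r"
    unfolding Nfun_def using r_pos by (simp add: field_simps)
  then show ?thesis using D_pos[OF assms(1) assms(1)] xbar_left assms r_pos by auto
qed

lemma N_unique_root:
  assumes "0 \<le> m" "m < xbar"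
  shows "\<exists>!x. 0 \<le> x \<and> N x m = 0"
proof -
  have N0: "0 < N 0 m"
    using N_pos_before_root[of 0 m m] N_diag_pos[OF assms] assms by (cases "m = 0") auto
  obtain \<kappa> where \<kappa>: "0 < \<kappa>" "\<And>x. 0 \<le> x \<Longrightarrow> inv_scale x * N x m \<le> inv_scale 0 * N 0 m - \<kappa> * x"
    using inv_scale_N_linear_decrease[OF assms(1)] by blast
  define X where "X = inv_scale 0 * N 0 m / \<kappa> + 1"
  have X: "0 < X" unfolding X_def using \<kappa>(1) inv_scale_pos[of 0] N0 by (simp add: add_pos_pos)
  have "inv_scale X * N X m < 0"
    using \<kappa>(2)[of X] \<kappa>(1) X by (simp add: X_def field_simps)
  moreover have "continuous_on {0..X} (\<lambda>x. inv_scale x * N x m)"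
    using a0 by (intro continuous_at_imp_continuous_on ballI DERIV_isCont[OF inv_scale_N_has_deriv]) auto
  ultimately obtain x where x: "0 \<le> x" "x \<le> X" "inv_scale x * N x m = 0"
    using IVT2'[of "\<lambda>x. inv_scale x * N x m" X 0 0] inv_scale_pos[of 0] N0 X by force
  then have root: "N x m = 0" using inv_scale_pos[of x] by simp
  have "y = x" if "0 \<le> y" "N y m = 0" for y
    using N_neg_after_root[of y x m] N_neg_after_root[of x y m] that assms x root
    by (cases y x rule: linorder_cases) auto
  with x(1) root show ?thesis by blast
qed

lemma eta_root: "0 \<le> m \<Longrightarrow> m < xbar \<Longrightarrow> 0 \<le> \<eta> m \<and> N (\<eta> m) m = 0"
  unfolding eta_def by (rule theI'[OF N_unique_root])

lemma eta_gt: assumes "0 \<le> m" "m < xbar" shows "m < \<eta> m"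
  using eta_root[OF assms] N_diag_pos[OF assms] N_neg_after_root[of "\<eta> m" m m] assms
  by (cases "\<eta> m" m rule: linorder_cases) auto

text \<open>As a function of \<open>m\<close>, \<open>N(x,m)\<close> is a combination of \<open>\<psi>\<close>, \<open>\<phi>\<close> and \<open>-D(x,x) U\<close>, so
  \<open>(L - r) N(x,\<cdot>) = -D(x,x) (L - r) U < 0\<close> on \<open>[0,u*)\<close> for the generator \<open>L\<close>: a nonpositive
  interior minimum is impossible there.\<close>
lemma N_nonpos_left_of_root:
  assumes "0 \<le> c" "c < x" "x < ustar" "x < xbar" and root: "N x c = 0" and m: "0 \<le> m" "m \<le> c"
  shows "N x m \<le> 0"
proof (rule ccontr)
  assume "\<not> N x m \<le> 0"
  define A where "A = \<phi> x - deriv \<phi> x * \<mu> x / r"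
  define B where "B = deriv \<psi> x * \<mu> x / r - \<psi> x"
  define W where "W = D x x"
  define h where "h y = A * \<psi> y + B * \<phi> y - W * U y" for y
  define h1 where "h1 y = A * deriv \<psi> y + B * deriv \<phi> y - W * dU y" for y
  define h2 where "h2 y = A * deriv (deriv \<psi>) y + B * deriv (deriv \<phi>) y - W * d2U y" for y
  have h_eq: "h y = N x y" for y
    unfolding h_def Nfun_def A_def B_def W_def Dfun_def
    by (simp add: algebra_simps add_divide_distrib diff_divide_distrib)
  have yI: "y \<in> state_space \<alpha>" if "0 < y" for y using that nonneg_in_state_space by simp
  have h1: "(h has_real_derivative h1 y) (at y)" if "0 < y" for y
    unfolding h_def h1_def
    by (intro DERIV_diff DERIV_add DERIV_cmult psi_has_deriv phi_has_deriv U_has_deriv yI that)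
  have h2: "(h1 has_real_derivative h2 y) (at y)" if "0 < y" for y
    unfolding h1_def h2_def
    by (intro DERIV_diff DERIV_add DERIV_cmult dpsi_has_deriv dphi_has_deriv dU_has_deriv yI that)
  have generator: "(\<sigma> y)\<^sup>2 / 2 * h2 y + \<mu> y * h1 y - r * h y
      = - W * (\<mu> y * dU y + (\<sigma> y)\<^sup>2 / 2 * d2U y - r * U y)" if "0 < y" for y
    unfolding h_def h1_def h2_def deriv2_psi[OF yI[OF that]] deriv2_phi[OF yI[OF that]]
    using sigma_nonzero[OF yI[OF that]] by (simp add: field_simps power2_eq_square)
  have "continuous_on {m..x} h"
    unfolding h_def using m
    by (intro continuous_intros continuous_on_psi continuous_on_phi
        continuous_on_subset[OF continuous_on_U]) (auto intro: nonneg_in_state_space)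
  moreover have "m \<le> x" using assms m by simp
  ultimately obtain m0 where m0: "m0 \<in> {m..x}" and is_min: "\<And>y. y \<in> {m..x} \<Longrightarrow> h m0 \<le> h y"
    using continuous_attains_inf[OF compact_Icc, of m x h] by auto
  have "h m0 \<le> 0" using is_min[of c] root h_eq assms m by simp
  moreover have "0 < h m" "0 < h x"
    using \<open>\<not> N x m \<le> 0\<close> h_eq N_diag_pos[of x] assms by auto
  ultimately have inside: "m < m0" "m0 < x" using m0 by (auto simp: le_less)
  then have "0 < m0" using m by simp
  have "h1 m0 = 0" and "0 \<le> (\<sigma> m0)\<^sup>2 / 2 * h2 m0"
    using local_min_imp_deriv2_nonneg[OF inside, of h h1 "h2 m0"] is_min h1 h2[OF \<open>0 < m0\<close>] m
    by auto
  moreover have "r * h m0 \<le> 0" using \<open>h m0 \<le> 0\<close> r_pos by (simp add: mult_nonneg_nonpos)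
  ultimately have "0 \<le> (\<sigma> m0)\<^sup>2 / 2 * h2 m0 + \<mu> m0 * h1 m0 - r * h m0" by simp
  moreover have "0 < W" unfolding W_def using D_pos assms by simp
  then have "- W * (\<mu> m0 * dU m0 + (\<sigma> m0)\<^sup>2 / 2 * d2U m0 - r * U m0) < 0"
    using U_gen \<open>0 < m0\<close> inside assms by simp
  ultimately show False using generator[OF \<open>0 < m0\<close>] by linarith
qed

lemma N_div_D_bounded:
  obtains K where "0 \<le> K" and "\<And>x m. x \<in> {0..xbar} \<Longrightarrow> m \<in> {0..xbar} \<Longrightarrow> \<bar>N x m / D x m\<bar> \<le> K"
proof -
  define S where "S = {0..xbar} \<times> {0..xbar}"
  have I: "{0..} \<subseteq> state_space \<alpha>" using nonneg_in_state_space by auto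
  have fst: "continuous_on S (\<lambda>z. f (fst z))" and snd: "continuous_on S (\<lambda>z. f (snd z))"
    if "continuous_on {0..} f" for f :: "real \<Rightarrow> real"
    using that by (auto simp: S_def intro!: continuous_on_compose2[OF that] continuous_intros)
  have cont: "continuous_on {0..} \<psi>" "continuous_on {0..} \<phi>" "continuous_on {0..} (deriv \<psi>)"
    "continuous_on {0..} (deriv \<phi>)" "continuous_on {0..} \<mu>"
    using I by (fact continuous_on_psi continuous_on_phi continuous_on_dpsi continuous_on_dphi
      continuous_on_mu)+
  have "continuous_on S (\<lambda>z. D (fst z) (snd z))"
    unfolding Dfun_def by (intro continuous_intros fst snd cont)
  moreover have "continuous_on S (\<lambda>z. N (fst z) (snd z))"
    unfolding Nfun_def Dfun_def
    by (intro continuous_intros fst snd cont continuous_on_U) (use r_pos in simp)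
  ultimately have "continuous_on S (\<lambda>z. N (fst z) (snd z) / D (fst z) (snd z))"
    using D_pos by (intro continuous_on_divide) (auto simp: S_def less_imp_neq[symmetric])
  then have "bounded ((\<lambda>z. N (fst z) (snd z) / D (fst z) (snd z)) ` S)"
    unfolding S_def by (intro compact_imp_bounded compact_continuous_image compact_Times) auto
  then obtain K where K: "\<And>x m. x \<in> {0..xbar} \<Longrightarrow> m \<in> {0..xbar} \<Longrightarrow> \<bar>N x m / D x m\<bar> \<le> K"
    unfolding bounded_iff S_def by fastforce
  moreover have "0 \<le> K" using K[of 0 0] xbar_pos by (meson abs_ge_zero atLeastAtMost_iff less_imp_le order_refl order_trans)
  ultimately show ?thesis using that by blast
qed

lemma Efun_nonpos:
  assumes "eps_density xbar c \<epsilon>" "0 \<le> x" "m \<in> {0..xbar}" "N x m \<le> 0"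
  shows "Efun \<mu> r U \<psi> \<phi> (f_eps xbar c \<epsilon>) (F_eps xbar c \<epsilon>) x m \<le> 0"
proof -
  have "0 \<le> f_eps xbar c \<epsilon> m / F_eps xbar c \<epsilon> m / G x"
    using assms gap_pos G_ge[of x] eps_density.f_eps_nonneg eps_density.F_eps_nonneg
    by (intro divide_nonneg_pos divide_nonneg_nonneg) auto
  moreover have "N x m / D x m \<le> 0" using assms D_pos by (intro divide_nonpos_pos) auto
  ultimately show ?thesis unfolding Efun_def by (rule mult_nonneg_nonpos)
qed

lemma Efun_abs_le:
  assumes dens: "eps_density xbar c \<epsilon>"
    and K: "\<And>x m. x \<in> {0..xbar} \<Longrightarrow> m \<in> {0..xbar} \<Longrightarrow> \<bar>N x m / D x m\<bar> \<le> K"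
    and x: "x \<in> {0..xbar}" and m: "m \<in> {c<..xbar}"
  shows "\<bar>Efun \<mu> r U \<psi> \<phi> (f_eps xbar c \<epsilon>) (F_eps xbar c \<epsilon>) x m\<bar> \<le> \<epsilon> * (4 * K / (1 - k / r))"
proof -
  interpret eps_density xbar c \<epsilon> by (fact dens)
  have m0: "m \<in> {0..xbar}" using m eps_pos eps_c by auto
  have F: "1/4 \<le> F_eps xbar c \<epsilon> m" using m eps_pos by (intro F_eps_ge) auto
  have G: "1 - k / r \<le> G x" using G_ge x by simp
  have "\<bar>Efun \<mu> r U \<psi> \<phi> (f_eps xbar c \<epsilon>) (F_eps xbar c \<epsilon>) x m\<bar>
      = \<epsilon> / F_eps xbar c \<epsilon> m * (1 / G x) * \<bar>N x m / D x m\<bar>"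
    unfolding Efun_def using m F G gap_pos eps_pos
    by (simp add: f_eps_right abs_mult)
  also have "\<dots> \<le> (4 * \<epsilon>) * (1 / (1 - k / r)) * K"
  proof (intro mult_mono)
    show "\<epsilon> / F_eps xbar c \<epsilon> m \<le> 4 * \<epsilon>" using F eps_pos by (simp add: field_simps)
    show "1 / G x \<le> 1 / (1 - k / r)" using G gap_pos by (simp add: frac_le)
  qed (use K[OF x m0] F G gap_pos eps_pos in auto)
  finally show ?thesis by (simp add: ac_simps)
qed

lemma cauchy_sol_le_root:
  assumes dens: "eps_density xbar c \<epsilon>"
    and sol: "cauchy_sol (Efun \<mu> r U \<psi> \<phi> (f_eps xbar c \<epsilon>) (F_eps xbar c \<epsilon>)) (\<eta> 0) xbar xbar b"
    and root: "c < x" "x < ustar" "x < xbar" "N x c = 0" and start: "\<eta> 0 \<le> x" and m: "m \<in> {0..c}"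
  shows "b m \<le> x"
proof (rule upper_barrier[OF _ _ _ m])
  have c: "0 \<le> c" "c < xbar" using dens unfolding eps_density_def by auto
  have range: "\<And>t. t \<in> {0..xbar} \<Longrightarrow> b t \<in> {0..xbar}" and "continuous_on {0..xbar} b"
    using sol unfolding cauchy_sol_def by auto
  then show "continuous_on {0..c} b" using c by (auto intro: continuous_on_subset)
  show "b 0 \<le> x" using sol start by (simp add: cauchy_sol_def)
  fix t assume t: "t \<in> {0<..<c}" "x < b t"
  have "N x t \<le> 0" using N_nonpos_left_of_root[OF c(1) root] t by simp
  then have "N (b t) t < 0" using N_neg_after_root[of x "b t" t] t root c by simp
  moreover have "0 \<le> b t" "t \<in> {0..xbar}" using range[of t] t c by auto
  ultimately have "Efun \<mu> r U \<psi> \<phi> (f_eps xbar c \<epsilon>) (F_eps xbar c \<epsilon>) (b t) t \<le> 0"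
    by (intro Efun_nonpos[OF dens]) auto
  moreover have "(b has_real_derivative Efun \<mu> r U \<psi> \<phi> (f_eps xbar c \<epsilon>) (F_eps xbar c \<epsilon>) (b t) t) (at t)"
    using t c by (intro cauchy_sol_has_deriv[OF sol]) auto
  ultimately show "\<exists>y. (b has_real_derivative y) (at t) \<and> y \<le> 0" by blast
qed

lemma cauchy_sol_increment_le:
  assumes dens: "eps_density xbar c \<epsilon>"
    and sol: "cauchy_sol (Efun \<mu> r U \<psi> \<phi> (f_eps xbar c \<epsilon>) (F_eps xbar c \<epsilon>)) (\<eta> 0) xbar xbar b"
    and K: "\<And>x m. x \<in> {0..xbar} \<Longrightarrow> m \<in> {0..xbar} \<Longrightarrow> \<bar>N x m / D x m\<bar> \<le> K"
    and y: "c \<le> y" "y \<le> xbar"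
  shows "b y - b c \<le> (y - c) * (\<epsilon> * (4 * K / (1 - k / r)))"
proof (rule increment_le_of_deriv_le[OF y(1)])
  have c: "0 < c" using dens unfolding eps_density_def by auto
  show "continuous_on {c..y} b"
    using sol y c unfolding cauchy_sol_def by (auto intro: continuous_on_subset)
  fix t assume t: "t \<in> {c<..<y}"
  then show "(b has_real_derivative Efun \<mu> r U \<psi> \<phi> (f_eps xbar c \<epsilon>) (F_eps xbar c \<epsilon>) (b t) t) (at t)"
    using y c by (intro cauchy_sol_has_deriv[OF sol]) auto
  have "b t \<in> {0..xbar}" using sol t y c unfolding cauchy_sol_def by auto
  then show "Efun \<mu> r U \<psi> \<phi> (f_eps xbar c \<epsilon>) (F_eps xbar c \<epsilon>) (b t) t \<le> \<epsilon> * (4 * K / (1 - k / r))"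
    using Efun_abs_le[OF dens K, of "b t" t] t y by auto
qed

text \<open>Below \<open>\<eta>(c)\<close> the solution cannot rise on \<open>[0,c]\<close>; beyond \<open>c\<close> its slope is \<open>O(\<epsilon>)\<close>, so it
  meets the diagonal before \<open>(\<eta>(c) + u*)/2\<close>.\<close>
lemma cauchy_sol_fixed_point_below:
  assumes dens: "eps_density xbar c \<epsilon>"
    and sol: "cauchy_sol (Efun \<mu> r U \<psi> \<phi> (f_eps xbar c \<epsilon>) (F_eps xbar c \<epsilon>)) (\<eta> 0) xbar xbar b"
    and K: "0 \<le> K" "\<And>x m. x \<in> {0..xbar} \<Longrightarrow> m \<in> {0..xbar} \<Longrightarrow> \<bar>N x m / D x m\<bar> \<le> K"
    and x0: "0 < \<eta> 0" and eta_c: "\<eta> c < ustar"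
    and small: "xbar * (\<epsilon> * (4 * K / (1 - k / r))) \<le> (ustar - \<eta> c) / 2"
  shows "Inf {m\<in>{0..xbar}. b m = m} < ustar"
proof -
  have c: "0 < c" "c < xbar" and "0 < \<epsilon>" using dens unfolding eps_density_def by auto
  have cont: "continuous_on {0..xbar} b" and b0: "0 \<le> b 0" and range: "b xbar \<le> xbar"
    using sol xbar_pos x0 unfolding cauchy_sol_def by auto
  show ?thesis
  proof (cases "xbar < ustar")
    case True
    then show ?thesis using Inf_fixed_points_le[OF cont b0 range _ order_refl] xbar_pos by simp
  next
    case False
    define x where "x = \<eta> c"
    have x: "c < x" "x < ustar" "x < xbar" "N x c = 0"
      using eta_root[of c] eta_gt[of c] c eta_c False by (auto simp: x_def)
    have "\<eta> 0 \<le> x"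
      using N_pos_before_root[of x "\<eta> 0" 0] eta_root[of 0] N_nonpos_left_of_root[of c x 0] x c by force
    then have "b c \<le> x" using cauchy_sol_le_root[OF dens sol x] c by simp
    define y where "y = (x + ustar) / 2"
    have y: "c \<le> y" "y < ustar" "y \<le> xbar" using x False by (auto simp: y_def)
    have "b y - b c \<le> (y - c) * (\<epsilon> * (4 * K / (1 - k / r)))"
      by (rule cauchy_sol_increment_le[OF dens sol K(2) y(1,3)])
    also have "\<dots> \<le> xbar * (\<epsilon> * (4 * K / (1 - k / r)))"
      using y c \<open>0 < \<epsilon>\<close> K(1) gap_pos by (intro mult_right_mono) auto
    finally have "b y - b c \<le> (ustar - x) / 2" using small unfolding x_def by linarith
    moreover have "2 * y = x + ustar" by (simp add: y_def)
    ultimately have "b y \<le> y" using \<open>b c \<le> x\<close> by argo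
    moreover have "continuous_on {0..y} b" using cont y c by (auto intro: continuous_on_subset)
    ultimately show ?thesis using Inf_fixed_points_le[of 0 y b xbar] b0 y c by simp
  qed
qed

theorem exists_eps_fixed_point_below:
  assumes c: "0 < c" "c < xbar" and x0: "0 < \<eta> 0" and eta_c: "\<eta> c < ustar"
  shows "\<exists>\<epsilon>. 0 < \<epsilon> \<and> \<epsilon> < 2 * min c (xbar - c) \<and>
     (\<forall>b. cauchy_sol (Efun \<mu> r U \<psi> \<phi> (f_eps xbar c \<epsilon>) (F_eps xbar c \<epsilon>)) (\<eta> 0) xbar xbar b
          \<longrightarrow> Inf {m\<in>{0..xbar}. b m = m} < ustar)"
proof -
  obtain K where K: "0 \<le> K" "\<And>x m. x \<in> {0..xbar} \<Longrightarrow> m \<in> {0..xbar} \<Longrightarrow> \<bar>N x m / D x m\<bar> \<le> K"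
    using N_div_D_bounded by blast
  have small: "\<forall>\<^sub>F \<epsilon> in at_right 0. a * \<epsilon> < b" if "0 < b" for a b :: real
    using that by (intro order_tendstoD(2)[of _ 0]) (auto intro!: tendsto_eq_intros)
  have "\<forall>\<^sub>F \<epsilon> in at_right 0. 0 < \<epsilon> \<and> 1 * \<epsilon> < 2 * min c (xbar - c) \<and> 2 * \<epsilon> < c \<and>
      (2 * xbar) * \<epsilon> < 1 \<and> (xbar * (4 * K / (1 - k / r))) * \<epsilon> < (ustar - \<eta> c) / 2"
    by (intro eventually_conj eventually_at_right_less small) (use c eta_c in auto)
  then obtain \<epsilon> where \<epsilon>: "0 < \<epsilon>" "\<epsilon> < 2 * min c (xbar - c)" "2 * \<epsilon> \<le> c" "2 * \<epsilon> * xbar \<le> 1"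
    "xbar * (\<epsilon> * (4 * K / (1 - k / r))) \<le> (ustar - \<eta> c) / 2"
    using eventually_happens'[OF trivial_limit_at_right_real] by (force simp: ac_simps)
  then have "eps_density xbar c \<epsilon>" using c by unfold_locales auto
  with \<epsilon> show ?thesis using cauchy_sol_fixed_point_below[OF _ _ K x0 eta_c] by blast
qed

end

theorem lemma5:
  fixes \<alpha> :: ereal
    and \<mu> \<sigma> U dU d2U \<psi> \<phi> :: "real \<Rightarrow> real"
    and r ustar xbar c :: real
  assumes alpha_neg: "\<alpha> < 0"
    and mu_lip: "\<exists>L. L-lipschitz_on (state_space \<alpha>) \<mu>"
    and sigma_lip: "\<exists>L. L-lipschitz_on (state_space \<alpha>) \<sigma>"
    and sigma_pos: "\<forall>x\<in>state_space \<alpha>. \<sigma> x > 0"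
    and nat_left: "natural_left \<alpha> \<mu> \<sigma>"
    and nat_right: "natural_right \<mu> \<sigma>"
    and r_pos: "r > 0"
    and U_nonneg: "\<forall>x\<ge>0. U x \<ge> 0"
    \<comment> \<open>(a)\<close>
    and mu_diff: "\<forall>x\<in>state_space \<alpha>. \<mu> differentiable (at x)"
    and sigma_diff: "\<forall>x\<in>state_space \<alpha>. \<sigma> differentiable (at x)"
    and dmu_lip: "\<exists>L. L-lipschitz_on (state_space \<alpha>) (deriv \<mu>)"
    and dsigma_lip: "\<exists>L. L-lipschitz_on (state_space \<alpha>) (deriv \<sigma>)"
    and mu0: "\<mu> 0 > r * U 0"
    and sup_dmu: "\<exists>k<r. \<forall>x\<ge>0. deriv \<mu> x \<le> k"
    \<comment> \<open>(b)\<close>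
    and U_mono: "mono_on {0..} U"
    and U_concave: "concave_on {0..} U"
    and U_d1: "\<forall>x\<ge>0. (U has_real_derivative dU x) (at x within {0..})"
    and U_d2: "\<forall>x\<ge>0. (dU has_real_derivative d2U x) (at x within {0..})"
    and U_C2: "continuous_on {0..} d2U"
    and ustar_nonneg: "ustar \<ge> 0"
    and dU_ge1: "\<forall>x\<in>{0..ustar}. dU x \<ge> 1"
    and dU_eq1: "\<forall>x\<ge>ustar. dU x = 1"
    and U_gen: "\<forall>x\<in>{0..<ustar}. \<mu> x * dU x + (\<sigma> x)\<^sup>2 / 2 * d2U x - r * U x > 0"
    \<comment> \<open>(c)\<close>
    and mu_d2: "\<forall>x\<ge>0. deriv \<mu> differentiable (at x)"
    and mu_concave: "\<forall>x\<ge>0. deriv (deriv \<mu>) x \<le> 0"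
    \<comment> \<open>psi, phi: positive increasing / decreasing solutions of the ODE\<close>
    and psi_diff: "\<forall>x\<in>state_space \<alpha>. \<psi> differentiable (at x) \<and> deriv \<psi> differentiable (at x)"
    and phi_diff: "\<forall>x\<in>state_space \<alpha>. \<phi> differentiable (at x) \<and> deriv \<phi> differentiable (at x)"
    and psi_ode: "\<forall>x\<in>state_space \<alpha>.
        (\<sigma> x)\<^sup>2 / 2 * deriv (deriv \<psi>) x + \<mu> x * deriv \<psi> x - r * \<psi> x = 0"
    and phi_ode: "\<forall>x\<in>state_space \<alpha>.
        (\<sigma> x)\<^sup>2 / 2 * deriv (deriv \<phi>) x + \<mu> x * deriv \<phi> x - r * \<phi> x = 0"
    and psi_pos: "\<forall>x\<in>state_space \<alpha>. \<psi> x > 0"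
    and phi_pos: "\<forall>x\<in>state_space \<alpha>. \<phi> x > 0"
    and psi_inc: "strict_mono_on (state_space \<alpha>) \<psi>"
    and phi_dec: "\<forall>x\<in>state_space \<alpha>. \<forall>y\<in>state_space \<alpha>. x < y \<longrightarrow> \<phi> y < \<phi> x"
    \<comment> \<open>xbar\<close>
    and xbar_pos: "xbar > 0"
    and xbar_left: "\<forall>x\<in>{0..<xbar}. \<mu> x - r * U x > 0"
    and xbar_right: "\<forall>x>xbar. \<mu> x - r * U x < 0"
    \<comment> \<open>hypotheses of the lemma\<close>
    and x0_pos: "0 < eta \<mu> r U \<psi> \<phi> 0"
    and x0_lt: "eta \<mu> r U \<psi> \<phi> 0 < ustar"
    and c_pos: "c > 0"
    and c_lt: "c < xbar"
    and eta_c: "eta \<mu> r U \<psi> \<phi> c < ustar"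
  shows "\<exists>\<epsilon>. 0 < \<epsilon> \<and> \<epsilon> < 2 * min c (xbar - c) \<and>
     (\<forall>b. cauchy_sol (Efun \<mu> r U \<psi> \<phi> (f_eps xbar c \<epsilon>) (F_eps xbar c \<epsilon>))
                      (eta \<mu> r U \<psi> \<phi> 0) xbar xbar b
          \<longrightarrow> Inf {m\<in>{0..xbar}. b m = m} < ustar)"
proof -
  obtain k where "k < r" "\<forall>x\<ge>0. deriv \<mu> x \<le> k" using sup_dmu by blast
  moreover obtain a0 where "\<alpha> < ereal a0" "ereal a0 < 0" using ereal_dense2[OF alpha_neg] by blast
  ultimately interpret diffusion_setting \<alpha> \<mu> \<sigma> U dU d2U \<psi> \<phi> r ustar xbar k a0
    using sigma_pos r_pos mu_diff sigma_diff U_d1 U_d2 U_gen psi_diff phi_diff psi_ode phi_ode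
      psi_pos phi_pos psi_inc phi_dec xbar_pos xbar_left
    by unfold_locales simp_all
  show ?thesis by (rule exists_eps_fixed_point_below[OF c_pos c_lt x0_pos eta_c])
qed

end
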